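(* Let $G$ be a connected graph with a list-assignment $L$ such that $|L(u)|\ge\deg(u)+1$ for all $u\in V(G)$. If there exist $v,w\in V(G)$ such that $vw\in E(G)$, $L(v)\not\subseteq L(w)$, and $G-v$ is connected, then $\alpha\sim\beta$ whenever $\alpha$ and $\beta$ are both unfrozen $L$-colourings.
   Context: An $L$-colouring is a proper colouring $\varphi$ with $\varphi(v)\in L(v)$ for all $v$. A vertex $u$ is frozen under $\varphi$ if every colour of $L(u)\setminus\{\varphi(u)\}$ appears on a neighbour of $u$; a colouring is unfrozen if at least one vertex is not frozen. $\alpha\sim\beta$ means $\alpha$ can be transformed into $\beta$ by a sequence of single-vertex recolouring steps, each keeping the colouring a proper $L$-colouring. *)

theory Defs
  imports Main
begin

definition simple_graph :: "'a set \<Rightarrow> ('a \<Rightarrow> 'a \<Rightarrow> bool) \<Rightarrow> bool" where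
  "simple_graph V E \<longleftrightarrow> finite V \<and> (\<forall>u w. E u w \<longrightarrow> u \<in> V \<and> w \<in> V)
     \<and> (\<forall>u w. E u w \<longrightarrow> E w u) \<and> (\<forall>u. \<not> E u u)"

definition degree :: "'a set \<Rightarrow> ('a \<Rightarrow> 'a \<Rightarrow> bool) \<Rightarrow> 'a \<Rightarrow> nat" where
  "degree V E u = card {w \<in> V. E u w}"

definition connected_on :: "'a set \<Rightarrow> ('a \<Rightarrow> 'a \<Rightarrow> bool) \<Rightarrow> bool" where
  "connected_on S E \<longleftrightarrow>
     (\<forall>x\<in>S. \<forall>y\<in>S. (\<lambda>a b. a \<in> S \<and> b \<in> S \<and> E a b)\<^sup>*\<^sup>* x y)"

text \<open>Proper L-colourings; outside V the colouring is fixed to undefined, so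
colourings are determined by their values on V.\<close>
definition L_colouring :: "'a set \<Rightarrow> ('a \<Rightarrow> 'a \<Rightarrow> bool) \<Rightarrow> ('a \<Rightarrow> 'c set) \<Rightarrow> ('a \<Rightarrow> 'c) \<Rightarrow> bool" where
  "L_colouring V E L \<phi> \<longleftrightarrow> (\<forall>u\<in>V. \<phi> u \<in> L u)
     \<and> (\<forall>u\<in>V. \<forall>w\<in>V. E u w \<longrightarrow> \<phi> u \<noteq> \<phi> w)
     \<and> (\<forall>u. u \<notin> V \<longrightarrow> \<phi> u = undefined)"

definition frozen :: "'a set \<Rightarrow> ('a \<Rightarrow> 'a \<Rightarrow> bool) \<Rightarrow> ('a \<Rightarrow> 'c set) \<Rightarrow> ('a \<Rightarrow> 'c) \<Rightarrow> 'a \<Rightarrow> bool" where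
  "frozen V E L \<phi> u \<longleftrightarrow> (\<forall>c \<in> L u - {\<phi> u}. \<exists>w\<in>V. E u w \<and> \<phi> w = c)"

definition unfrozen :: "'a set \<Rightarrow> ('a \<Rightarrow> 'a \<Rightarrow> bool) \<Rightarrow> ('a \<Rightarrow> 'c set) \<Rightarrow> ('a \<Rightarrow> 'c) \<Rightarrow> bool" where
  "unfrozen V E L \<phi> \<longleftrightarrow> L_colouring V E L \<phi> \<and> (\<exists>u\<in>V. \<not> frozen V E L \<phi> u)"

definition recolour_step :: "'a set \<Rightarrow> ('a \<Rightarrow> 'a \<Rightarrow> bool) \<Rightarrow> ('a \<Rightarrow> 'c set) \<Rightarrow> ('a \<Rightarrow> 'c) \<Rightarrow> ('a \<Rightarrow> 'c) \<Rightarrow> bool" where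
  "recolour_step V E L \<alpha> \<beta> \<longleftrightarrow> L_colouring V E L \<alpha> \<and> L_colouring V E L \<beta>
     \<and> (\<exists>v\<in>V. \<exists>c. \<beta> = \<alpha>(v := c))"

definition reconf :: "'a set \<Rightarrow> ('a \<Rightarrow> 'a \<Rightarrow> bool) \<Rightarrow> ('a \<Rightarrow> 'c set) \<Rightarrow> ('a \<Rightarrow> 'c) \<Rightarrow> ('a \<Rightarrow> 'c) \<Rightarrow> bool" where
  "reconf V E L \<alpha> \<beta> \<longleftrightarrow> (recolour_step V E L)\<^sup>*\<^sup>* \<alpha> \<beta>"

end

theory Submission
  imports Defs
begin

(*
  Fix a colour c in L v - L w. Any two L-colourings giving v the colour c are linked:
  delete v and remove c from the lists of its neighbours. The new lists still have
  |L' u| >= deg u + 1 in G - v, and w, which loses the neighbour v but not the colour c,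
  has a colour to spare. If every vertex of a graph is joined to such a slack vertex,
  all list colourings are linked: delete a slack vertex r, reconfigure the rest by
  induction, and let r step aside whenever its colour is needed.

  It remains to reach a colouring with v coloured c from any unfrozen colouring. This is
  done by induction on the number of neighbours of v coloured c (the blockers). If a
  blocker, v or w is unfrozen, a blocker can be removed. Otherwise, an unfrozen vertex is
  pushed along a path of G - v towards w without creating new blockers. The only
  obstruction is a neighbour r of v whose only free colour is c. Then r takes c for a
  while so that v and w can exchange colours, and this unfreezes a blocker.
*)

abbreviation induced_adj :: "'a set \<Rightarrow> ('a \<Rightarrow> 'a \<Rightarrow> bool) \<Rightarrow> 'a \<Rightarrow> 'a \<Rightarrow> bool" where
  "induced_adj S E \<equiv> \<lambda>a b. a \<in> S \<and> b \<in> S \<and> E a b"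

lemma colouring_in_list: "L_colouring V E L \<phi> \<Longrightarrow> x \<in> V \<Longrightarrow> \<phi> x \<in> L x"
  unfolding L_colouring_def by blast

lemma colouring_proper:
  "L_colouring V E L \<phi> \<Longrightarrow> x \<in> V \<Longrightarrow> y \<in> V \<Longrightarrow> E x y \<Longrightarrow> \<phi> x \<noteq> \<phi> y"
  unfolding L_colouring_def by blast

lemma reconf_refl: "reconf V E L \<alpha> \<alpha>"
  unfolding reconf_def by simp

lemma reconf_trans [trans]:
  "reconf V E L \<alpha> \<beta> \<Longrightarrow> reconf V E L \<beta> \<gamma> \<Longrightarrow> reconf V E L \<alpha> \<gamma>"
  unfolding reconf_def by (rule rtranclp_trans)

lemma symp_recolour_step: "symp (recolour_step V E L)"
proof (rule sympI)
  fix \<alpha> \<beta> assume "recolour_step V E L \<alpha> \<beta>"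
  then obtain x e where "L_colouring V E L \<alpha>" "L_colouring V E L \<beta>" "x \<in> V" "\<beta> = \<alpha>(x := e)"
    unfolding recolour_step_def by blast
  then show "recolour_step V E L \<beta> \<alpha>"
    unfolding recolour_step_def by (intro conjI bexI[of _ x] exI[of _ "\<alpha> x"]) auto
qed

lemma reconf_sym: "reconf V E L \<alpha> \<beta> \<Longrightarrow> reconf V E L \<beta> \<alpha>"
  unfolding reconf_def by (rule sympD[OF symp_rtranclp[OF symp_recolour_step]])

lemma reconf_colouring: "reconf V E L \<alpha> \<beta> \<Longrightarrow> L_colouring V E L \<alpha> \<Longrightarrow> L_colouring V E L \<beta>"
  unfolding reconf_def by (induction rule: rtranclp_induct) (auto simp: recolour_step_def)

lemma reconf_upd:
  assumes "L_colouring V E L \<alpha>" "L_colouring V E L (\<alpha>(x := e))" "x \<in> V"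
  shows "reconf V E L \<alpha> (\<alpha>(x := e))"
  using assms unfolding reconf_def recolour_step_def by blast

lemma colouring_upd:
  assumes "symp E" "L_colouring V E L \<phi>" "x \<in> V" "e \<in> L x" "\<forall>y\<in>V. E x y \<longrightarrow> \<phi> y \<noteq> e"
  shows "L_colouring V E L (\<phi>(x := e))"
  using assms unfolding L_colouring_def by (auto dest: sympD)

lemma reconf_recolour:
  assumes "symp E" "L_colouring V E L \<alpha>" "reconf V E L \<alpha> \<phi>"
    and "x \<in> V" "e \<in> L x" "\<forall>y\<in>V. E x y \<longrightarrow> \<phi> y \<noteq> e"
  shows "reconf V E L \<alpha> (\<phi>(x := e))"
proof -
  have "L_colouring V E L \<phi>" using assms(2,3) by (rule reconf_colouring[rotated])
  with assms show ?thesis by (metis reconf_trans reconf_upd colouring_upd)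
qed

lemma colouring_restrict:
  "L_colouring V E L \<phi> \<Longrightarrow> L_colouring (V - {r}) E L (\<phi>(r := undefined))"
  unfolding L_colouring_def by auto

lemma colouring_extend:
  assumes "symp E" "irreflp E" "L_colouring (V - {r}) E L \<delta>"
    and "r \<in> V" "b \<in> L r" "\<forall>x\<in>V. E r x \<longrightarrow> \<delta> x \<noteq> b"
  shows "L_colouring V E L (\<delta>(r := b))"
  using assms unfolding L_colouring_def by (auto dest: sympD irreflpD)

lemma colouring_mono_lists:
  "L_colouring V E M \<phi> \<Longrightarrow> \<forall>u\<in>V. M u \<subseteq> L u \<Longrightarrow> L_colouring V E L \<phi>"
  unfolding L_colouring_def by blast

lemma reconf_extend_fixed:
  assumes "r \<in> V" "reconf (V - {r}) E M \<gamma> \<delta>"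
    and extend: "\<And>\<phi>. L_colouring (V - {r}) E M \<phi> \<Longrightarrow> L_colouring V E L (\<phi>(r := c))"
  shows "reconf V E L (\<gamma>(r := c)) (\<delta>(r := c))"
  using assms(2) unfolding reconf_def
proof (induction rule: rtranclp_induct)
  case (step \<phi> \<psi>)
  then obtain y e where "L_colouring (V - {r}) E M \<phi>" "L_colouring (V - {r}) E M \<psi>"
    and "y \<in> V - {r}" "\<psi> = \<phi>(y := e)"
    unfolding recolour_step_def by blast
  then have "recolour_step V E L (\<phi>(r := c)) (\<psi>(r := c))"
    unfolding recolour_step_def by (auto intro!: extend fun_upd_twist)
  then show ?case by (rule rtranclp.rtrancl_into_rtrancl[OF step.IH])
qed simp

lemma not_frozenE:
  assumes "\<not> frozen V E L \<phi> x"
  obtains e where "e \<in> L x" "e \<noteq> \<phi> x" "\<forall>y\<in>V. E x y \<longrightarrow> \<phi> y \<noteq> e"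
  using assms unfolding frozen_def by blast

lemma not_frozen_recoloured:
  assumes "irreflp E" "L_colouring V E L \<phi>" "x \<in> V" "e \<noteq> \<phi> x"
  shows "\<not> frozen V E L (\<phi>(x := e)) x"
proof -
  have "\<phi> x \<in> L x - {e}" and "\<forall>y\<in>V. E x y \<longrightarrow> (\<phi>(x := e)) y \<noteq> \<phi> x"
    using assms unfolding L_colouring_def by (auto dest: irreflpD) metis
  then show ?thesis unfolding frozen_def by (metis fun_upd_same)
qed

lemma frozen_nbr_colours:
  assumes "finite V" "L_colouring V E L \<phi>" "x \<in> V"
    and "finite (L x)" "degree V E x + 1 \<le> card (L x)" "frozen V E L \<phi> x"
  shows "\<phi> ` {y \<in> V. E x y} = L x - {\<phi> x}" and "inj_on \<phi> {y \<in> V. E x y}"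
proof -
  let ?N = "{y \<in> V. E x y}"
  have "finite ?N" using assms(1) by simp
  have cover: "L x - {\<phi> x} \<subseteq> \<phi> ` ?N"
    using assms(6) unfolding frozen_def by (force simp: image_iff)
  have "card (\<phi> ` ?N) \<le> card ?N"
    using \<open>finite ?N\<close> by (rule card_image_le)
  also have "card ?N \<le> card (L x) - 1"
    using assms(5) unfolding degree_def by simp
  also have "\<dots> = card (L x - {\<phi> x})"
    using assms(2-4) unfolding L_colouring_def by simp
  finally have small: "card (\<phi> ` ?N) \<le> card (L x - {\<phi> x})" .
  show image: "\<phi> ` ?N = L x - {\<phi> x}"
    using card_seteq[OF finite_imageI[OF \<open>finite ?N\<close>] cover small] by simp
  have "card (\<phi> ` ?N) = card ?N"
    using arg_cong[OF image, of card] \<open>card ?N \<le> card (L x) - 1\<close> \<open>card (L x) - 1 = card (L x - {\<phi> x})\<close>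
      card_image_le[OF \<open>finite ?N\<close>, of \<phi>] by linarith
  then show "inj_on \<phi> ?N"
    by (rule eq_card_imp_inj_on[OF \<open>finite ?N\<close>])
qed

lemma not_frozen_after_recolouring_nbr:
  assumes "finite V" "irreflp E" "L_colouring V E L \<phi>" "y \<in> V"
    and "finite (L y)" "degree V E y + 1 \<le> card (L y)" "frozen V E L \<phi> y"
    and "z \<in> V" "E y z" "e \<noteq> \<phi> z"
  shows "\<not> frozen V E L (\<phi>(z := e)) y"
proof
  assume frozen_after: "frozen V E L (\<phi>(z := e)) y"
  have "y \<noteq> z" using assms(2,9) by (auto dest: irreflpD)
  have "\<phi> z \<in> L y - {\<phi> y}"
    using frozen_nbr_colours(1)[OF assms(1,3-7)] assms(8,9) by blast
  then obtain x where "x \<in> V" "E y x" "(\<phi>(z := e)) x = \<phi> z"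
    using frozen_after \<open>y \<noteq> z\<close> unfolding frozen_def by auto
  then show False
    using frozen_nbr_colours(2)[OF assms(1,3-7)] assms(8-10) unfolding inj_on_def
    by (cases "x = z") auto
qed

lemma degree_Diff_le: "finite V \<Longrightarrow> degree (V - {r}) E x \<le> degree V E x"
  unfolding degree_def by (rule card_mono) auto

lemma degree_Diff_nbr:
  assumes "finite V" "r \<in> V" "E x r"
  shows "degree (V - {r}) E x + 1 = degree V E x"
proof -
  have "{y \<in> V. E x y} = insert r {y \<in> V - {r}. E x y}" using assms(2,3) by auto
  then show ?thesis unfolding degree_def using assms(1) by simp
qed

definition slack_reachable :: "'a set \<Rightarrow> ('a \<Rightarrow> 'a \<Rightarrow> bool) \<Rightarrow> ('a \<Rightarrow> 'c set) \<Rightarrow> 'a \<Rightarrow> bool" where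
  "slack_reachable V E M u \<longleftrightarrow>
     (\<exists>s\<in>V. (induced_adj V E)\<^sup>*\<^sup>* u s \<and> degree V E s + 2 \<le> card (M s))"

lemma slack_free_colour:
  assumes "finite V" "degree V E r + 2 \<le> card (M r)"
  obtains q where "q \<in> M r" "q \<noteq> e" "\<forall>x\<in>V. E r x \<longrightarrow> \<delta> x \<noteq> q"
proof -
  let ?used = "insert e (\<delta> ` {x \<in> V. E r x})"
  have "card ?used \<le> card (\<delta> ` {x \<in> V. E r x}) + 1"
    by (simp add: card_insert_le_m1)
  also have "card (\<delta> ` {x \<in> V. E r x}) \<le> degree V E r"
    unfolding degree_def using assms(1) by (simp add: card_image_le)
  finally have "card ?used < card (M r)" using assms(2) by linarith
  moreover have "finite ?used" using assms(1) by simp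
  ultimately have "\<not> M r \<subseteq> ?used"
    by (metis card_mono leD)
  then show ?thesis using that by blast
qed

lemma reconf_extend_slack:
  assumes "finite V" "symp E" "irreflp E" "r \<in> V" "degree V E r + 2 \<le> card (M r)"
    and "reconf (V - {r}) E M \<gamma> \<delta>" "L_colouring V E M (\<gamma>(r := p))"
  shows "\<exists>q. L_colouring V E M (\<delta>(r := q)) \<and> reconf V E M (\<gamma>(r := p)) (\<delta>(r := q))"
  using assms(6) unfolding reconf_def
proof (induction rule: rtranclp_induct)
  case base
  then show ?case using assms(7) by blast
next
  case (step \<phi> \<psi>)
  then obtain q where col_q: "L_colouring V E M (\<phi>(r := q))"
    and reconf_q: "(recolour_step V E M)\<^sup>*\<^sup>* (\<gamma>(r := p)) (\<phi>(r := q))"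
    by blast
  from step.hyps(2) obtain y e where "L_colouring (V - {r}) E M \<phi>" "L_colouring (V - {r}) E M \<psi>"
    and y: "y \<in> V - {r}" and \<psi>: "\<psi> = \<phi>(y := e)"
    unfolding recolour_step_def by blast
  \<comment> \<open>r first moves to a colour that is also different from the incoming colour e\<close>
  obtain q' where q': "q' \<in> M r" "q' \<noteq> e" "\<forall>x\<in>V. E r x \<longrightarrow> \<phi> x \<noteq> q'"
    by (rule slack_free_colour[of V E r M, OF assms(1,5)])
  have col_\<phi>: "L_colouring V E M (\<phi>(r := q'))"
    using colouring_extend[OF assms(2,3) \<open>L_colouring (V - {r}) E M \<phi>\<close> assms(4)] q' by blast
  have "\<forall>x\<in>V. E r x \<longrightarrow> \<psi> x \<noteq> q'"
    using q' unfolding \<psi> by auto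
  then have col_\<psi>: "L_colouring V E M (\<psi>(r := q'))"
    using colouring_extend[OF assms(2,3) \<open>L_colouring (V - {r}) E M \<psi>\<close> assms(4) \<open>q' \<in> M r\<close>] by blast
  have "reconf V E M (\<gamma>(r := p)) (\<phi>(r := q))"
    using reconf_q unfolding reconf_def .
  also have "reconf V E M (\<phi>(r := q)) (\<phi>(r := q'))"
    using reconf_upd[OF col_q, of r q'] col_\<phi> assms(4) by simp
  also have "reconf V E M (\<phi>(r := q')) (\<psi>(r := q'))"
    using reconf_upd[OF col_\<phi>, of y e] col_\<psi> y \<psi> by (simp add: fun_upd_twist)
  finally show ?case using col_\<psi> unfolding reconf_def by blast
qed

lemma slack_reachable_Diff:
  assumes "finite V" "r \<in> V" "\<forall>u\<in>V. degree V E u + 1 \<le> card (M u)"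
    and "slack_reachable V E M x" "x \<in> V - {r}"
  shows "slack_reachable (V - {r}) E M x"
proof -
  obtain s where path: "(induced_adj V E)\<^sup>*\<^sup>* x s" and "s \<in> V" "degree V E s + 2 \<le> card (M s)"
    using assms(4) unfolding slack_reachable_def by blast
  from path assms(5) show ?thesis
  proof (induction rule: converse_rtranclp_induct)
    case base
    then show ?case
      using \<open>degree V E s + 2 \<le> card (M s)\<close> degree_Diff_le[OF assms(1), of r E s]
      unfolding slack_reachable_def by force
  next
    case (step x y)
    show ?case
    proof (cases "y = r")
      case True
      then have "degree (V - {r}) E x + 1 = degree V E x"
        using degree_Diff_nbr[OF assms(1,2)] step.hyps(1) by blast
      then have "degree (V - {r}) E x + 2 \<le> card (M x)"
        using assms(3) step.prems by fastforce
      then show ?thesis unfolding slack_reachable_def using step.prems by blast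
    next
      case False
      then have "y \<in> V - {r}" and edge: "induced_adj (V - {r}) E x y"
        using step.hyps(1) step.prems by auto
      then obtain s' where "s' \<in> V - {r}" "degree (V - {r}) E s' + 2 \<le> card (M s')"
        and "(induced_adj (V - {r}) E)\<^sup>*\<^sup>* y s'"
        using step.IH unfolding slack_reachable_def by blast
      moreover from edge this(3) have "(induced_adj (V - {r}) E)\<^sup>*\<^sup>* x s'"
        by (rule converse_rtranclp_into_rtranclp)
      ultimately show ?thesis unfolding slack_reachable_def by blast
    qed
  qed
qed

lemma reconf_if_slack_reachable:
  assumes "finite V" "symp E" "irreflp E"
    and "\<forall>u\<in>V. degree V E u + 1 \<le> card (M u)" "\<forall>u\<in>V. slack_reachable V E M u"
    and "L_colouring V E M \<alpha>" "L_colouring V E M \<beta>"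
  shows "reconf V E M \<alpha> \<beta>"
  using assms
proof (induction "card V" arbitrary: V \<alpha> \<beta> rule: less_induct)
  case less
  show ?case
  proof (cases "V = {}")
    case True
    then have "\<alpha> = \<beta>" using less.prems(6,7) unfolding L_colouring_def by auto
    then show ?thesis by (simp add: reconf_refl)
  next
    case False
    then obtain r where r: "r \<in> V" and slack: "degree V E r + 2 \<le> card (M r)"
      using less.prems(5) unfolding slack_reachable_def by blast
    have "\<forall>u\<in>V - {r}. degree (V - {r}) E u + 1 \<le> card (M u)"
      using less.prems(4) degree_Diff_le[OF less.prems(1)] by (meson DiffD1 le_trans add_le_mono1)
    moreover have "\<forall>u\<in>V - {r}. slack_reachable (V - {r}) E M u"
      using slack_reachable_Diff[OF less.prems(1) r less.prems(4)] less.prems(5) by blast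
    ultimately have restricted: "reconf (V - {r}) E M (\<alpha>(r := undefined)) (\<beta>(r := undefined))"
      using less.prems(1-3,6,7) colouring_restrict
      by (intro less.hyps[OF card_Diff1_less[OF less.prems(1) r]]) auto
    have "L_colouring V E M ((\<alpha>(r := undefined))(r := \<alpha> r))"
      using less.prems(6) by simp
    then obtain q where col_q: "L_colouring V E M ((\<beta>(r := undefined))(r := q))"
      and "reconf V E M ((\<alpha>(r := undefined))(r := \<alpha> r)) ((\<beta>(r := undefined))(r := q))"
      using reconf_extend_slack[of V E r M, OF less.prems(1-3) r slack restricted] by blast
    then have "reconf V E M \<alpha> ((\<beta>(r := undefined))(r := q))" by simp
    also have "reconf V E M ((\<beta>(r := undefined))(r := q)) \<beta>"
      using reconf_upd[OF col_q, of r "\<beta> r"] less.prems(7) r by simp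
    finally show ?thesis .
  qed
qed

locale separating_colour =
  fixes V :: "'a set" and E :: "'a \<Rightarrow> 'a \<Rightarrow> bool" and L :: "'a \<Rightarrow> 'c set"
    and v w :: 'a and c :: 'c
  assumes graph: "simple_graph V E"
    and lists: "\<forall>u\<in>V. finite (L u) \<and> card (L u) \<ge> degree V E u + 1"
    and v: "v \<in> V" and w: "w \<in> V" and vw: "E v w"
    and c_v: "c \<in> L v" and c_w: "c \<notin> L w"
    and connected_minus_v: "connected_on (V - {v}) E"
begin

lemma finite_V: "finite V" and symp_E: "symp E" and irreflp_E: "irreflp E"
  using graph unfolding simple_graph_def by (auto intro: sympI irreflpI)

lemma edge_sym: "E x y \<Longrightarrow> E y x"
  using symp_E by (rule sympD)

lemma edge_neq: "E x y \<Longrightarrow> x \<noteq> y"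
  using irreflp_E by (auto dest: irreflpD)

lemmas recolour = reconf_recolour[OF symp_E]

lemma frozen_nbr_in_list:
  assumes "L_colouring V E L \<phi>" "frozen V E L \<phi> x" "x \<in> V" "y \<in> V" "E x y"
  shows "\<phi> y \<in> L x"
  using frozen_nbr_colours(1)[OF finite_V assms(1,3) _ _ assms(2)] lists assms(3-5) by auto

lemma frozen_nbr_unique:
  assumes "L_colouring V E L \<phi>" "frozen V E L \<phi> x" "x \<in> V" "y \<in> V" "E x y"
  shows "\<forall>y'\<in>V. E x y' \<longrightarrow> \<phi> y' = \<phi> y \<longrightarrow> y' = y"
  using frozen_nbr_colours(2)[OF finite_V assms(1,3) _ _ assms(2)] lists assms(3-5)
  unfolding inj_on_def by auto

lemma unfreeze_nbr:
  assumes "L_colouring V E L \<phi>" "frozen V E L \<phi> y" "y \<in> V" "z \<in> V" "E y z" "e \<noteq> \<phi> z"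
  shows "\<not> frozen V E L (\<phi>(z := e)) y"
  using not_frozen_after_recolouring_nbr[OF finite_V irreflp_E assms(1,3) _ _ assms(2,4-6)]
    lists assms(3) by auto

definition list_without_c :: "'a \<Rightarrow> 'c set" where
  "list_without_c u = (if E v u then L u - {c} else L u)"

lemma list_without_c_size:
  assumes "u \<in> V - {v}"
  shows "degree (V - {v}) E u + 1 \<le> card (list_without_c u)"
proof (cases "E v u")
  case True
  have "degree (V - {v}) E u + 1 = degree V E u"
    using degree_Diff_nbr[OF finite_V v] edge_sym[OF True] .
  moreover have "card (L u) - 1 \<le> card (L u - {c})"
    using diff_card_le_card_Diff[of "{c}" "L u"] by simp
  ultimately show ?thesis using True lists assms unfolding list_without_c_def by auto
next
  case False
  then show ?thesis
    using lists assms degree_Diff_le[OF finite_V, of v E u] unfolding list_without_c_def by auto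
qed

lemma slack_reachable_without_c:
  assumes "u \<in> V - {v}"
  shows "slack_reachable (V - {v}) E list_without_c u"
proof -
  have "degree (V - {v}) E w + 1 = degree V E w"
    using degree_Diff_nbr[OF finite_V v] edge_sym[OF vw] .
  moreover have "list_without_c w = L w" using c_w unfolding list_without_c_def by auto
  ultimately have "degree (V - {v}) E w + 2 \<le> card (list_without_c w)"
    using lists w by auto
  moreover have "w \<in> V - {v}" using w edge_neq[OF vw] by auto
  ultimately show ?thesis
    using connected_minus_v assms unfolding connected_on_def slack_reachable_def by blast
qed

lemma colouring_without_c:
  "L_colouring V E L \<phi> \<Longrightarrow> \<phi> v = c \<Longrightarrow> L_colouring (V - {v}) E list_without_c (\<phi>(v := undefined))"
  using v edge_sym unfolding L_colouring_def list_without_c_def by auto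

lemma colouring_with_c:
  assumes "L_colouring (V - {v}) E list_without_c \<phi>"
  shows "L_colouring V E L (\<phi>(v := c))"
proof (rule colouring_extend[of E V v L \<phi> c, OF symp_E irreflp_E _ v c_v])
  show "L_colouring (V - {v}) E L \<phi>"
    using assms by (rule colouring_mono_lists) (auto simp: list_without_c_def)
  show "\<forall>x\<in>V. E v x \<longrightarrow> \<phi> x \<noteq> c"
  proof (intro ballI impI)
    fix x assume "x \<in> V" "E v x"
    then have "x \<in> V - {v}" using edge_neq by fastforce
    then have "\<phi> x \<in> list_without_c x" using assms unfolding L_colouring_def by blast
    then show "\<phi> x \<noteq> c" using \<open>E v x\<close> unfolding list_without_c_def by simp
  qed
qed

lemma reconf_if_v_coloured_c:
  assumes "L_colouring V E L \<gamma>" "L_colouring V E L \<gamma>'" "\<gamma> v = c" "\<gamma>' v = c"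
  shows "reconf V E L \<gamma> \<gamma>'"
proof -
  have "reconf (V - {v}) E list_without_c (\<gamma>(v := undefined)) (\<gamma>'(v := undefined))"
    using finite_V list_without_c_size slack_reachable_without_c
      colouring_without_c[OF assms(1,3)] colouring_without_c[OF assms(2,4)]
    by (intro reconf_if_slack_reachable[OF _ symp_E irreflp_E]) auto
  then have "reconf V E L ((\<gamma>(v := undefined))(v := c)) ((\<gamma>'(v := undefined))(v := c))"
    using reconf_extend_fixed[OF v _ colouring_with_c] by blast
  then show ?thesis using assms(3,4) by (simp add: fun_upd_idem)
qed

definition blockers :: "('a \<Rightarrow> 'c) \<Rightarrow> 'a set" where
  "blockers \<phi> = {u \<in> V. E v u \<and> \<phi> u = c}"

definition reaches_c :: "('a \<Rightarrow> 'c) \<Rightarrow> bool" where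
  "reaches_c \<phi> \<longleftrightarrow> (\<exists>\<psi>. reconf V E L \<phi> \<psi> \<and> \<psi> v = c)"

definition reaches_c_below :: "nat \<Rightarrow> bool" where
  "reaches_c_below n \<longleftrightarrow> (\<forall>\<phi>. unfrozen V E L \<phi> \<longrightarrow> card (blockers \<phi>) < n \<longrightarrow> reaches_c \<phi>)"

definition stuck :: "('a \<Rightarrow> 'c) \<Rightarrow> bool" where
  "stuck \<phi> \<longleftrightarrow> blockers \<phi> \<noteq> {} \<and> (\<forall>u\<in>blockers \<phi>. frozen V E L \<phi> u)
     \<and> frozen V E L \<phi> v \<and> frozen V E L \<phi> w"

lemma reaches_c_reconf: "reconf V E L \<phi> \<psi> \<Longrightarrow> reaches_c \<psi> \<Longrightarrow> reaches_c \<phi>"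
  unfolding reaches_c_def using reconf_trans by blast

lemma reaches_c_no_blockers:
  assumes "L_colouring V E L \<phi>" "blockers \<phi> = {}"
  shows "reaches_c \<phi>"
proof -
  have "reconf V E L \<phi> (\<phi>(v := c))"
    using assms(2) unfolding blockers_def by (intro recolour[OF assms(1) reconf_refl v c_v]) auto
  then show ?thesis unfolding reaches_c_def by force
qed

lemma reaches_c_blocker_not_frozen:
  assumes "reaches_c_below (card (blockers \<phi>))" "L_colouring V E L \<phi>"
    and "u \<in> blockers \<phi>" "\<not> frozen V E L \<phi> u"
  shows "reaches_c \<phi>"
proof -
  obtain e where e: "e \<in> L u" "e \<noteq> \<phi> u" "\<forall>y\<in>V. E u y \<longrightarrow> \<phi> y \<noteq> e"
    using assms(4) by (rule not_frozenE)
  have u: "u \<in> V" "\<phi> u = c" using assms(3) unfolding blockers_def by auto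
  have step: "reconf V E L \<phi> (\<phi>(u := e))"
    using e by (intro recolour[OF assms(2) reconf_refl u(1)]) auto
  have "finite (blockers \<phi>)" using finite_V unfolding blockers_def by simp
  then have "card (blockers \<phi> - {u}) < card (blockers \<phi>)"
    using assms(3) by (rule card_Diff1_less)
  moreover have "blockers (\<phi>(u := e)) = blockers \<phi> - {u}"
    using u e(2) unfolding blockers_def by auto
  ultimately have "card (blockers (\<phi>(u := e))) < card (blockers \<phi>)" by simp
  moreover have "unfrozen V E L (\<phi>(u := e))"
    using not_frozen_recoloured[OF irreflp_E assms(2) u(1) e(2)] reconf_colouring[OF step assms(2)] u(1)
    unfolding unfrozen_def by blast
  ultimately have "reaches_c (\<phi>(u := e))"
    using assms(1) unfolding reaches_c_below_def by blast
  with step show ?thesis by (rule reaches_c_reconf)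
qed

lemma reaches_c_v_not_frozen:
  assumes "reaches_c_below (card (blockers \<phi>))" "L_colouring V E L \<phi>" "\<not> frozen V E L \<phi> v"
  shows "reaches_c \<phi>"
proof (cases "\<exists>u\<in>blockers \<phi>. frozen V E L \<phi> u")
  case True
  then obtain u where u: "u \<in> blockers \<phi>" "frozen V E L \<phi> u" by blast
  then have "u \<in> V" "E u v" unfolding blockers_def by (auto intro: edge_sym)
  obtain e where e: "e \<in> L v" "e \<noteq> \<phi> v" "\<forall>y\<in>V. E v y \<longrightarrow> \<phi> y \<noteq> e"
    using assms(3) by (rule not_frozenE)
  have step: "reconf V E L \<phi> (\<phi>(v := e))"
    using e by (intro recolour[OF assms(2) reconf_refl v]) auto
  have same_blockers: "blockers (\<phi>(v := e)) = blockers \<phi>"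
    unfolding blockers_def using edge_neq by auto
  have "\<not> frozen V E L (\<phi>(v := e)) u"
    by (rule unfreeze_nbr[OF assms(2) u(2) \<open>u \<in> V\<close> v \<open>E u v\<close> e(2)])
  then have "reaches_c (\<phi>(v := e))"
    using reaches_c_blocker_not_frozen[of "\<phi>(v := e)" u] assms(1) u(1) same_blockers
      reconf_colouring[OF step assms(2)] by simp
  with step show ?thesis by (rule reaches_c_reconf)
next
  case False
  then show ?thesis
    using reaches_c_no_blockers[OF assms(2)] reaches_c_blocker_not_frozen[OF assms(1,2)] by blast
qed

lemma reaches_c_w_not_frozen:
  assumes "reaches_c_below (card (blockers \<phi>))" "L_colouring V E L \<phi>" "\<not> frozen V E L \<phi> w"
  shows "reaches_c \<phi>"
proof (cases "frozen V E L \<phi> v")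
  case True
  obtain f where f: "f \<in> L w" "f \<noteq> \<phi> w" "\<forall>y\<in>V. E w y \<longrightarrow> \<phi> y \<noteq> f"
    using assms(3) by (rule not_frozenE)
  have step: "reconf V E L \<phi> (\<phi>(w := f))"
    using f by (intro recolour[OF assms(2) reconf_refl w]) auto
  have "\<phi> w \<in> L w" using colouring_in_list[OF assms(2) w] .
  then have same_blockers: "blockers (\<phi>(w := f)) = blockers \<phi>"
    unfolding blockers_def using f(1) c_w by auto
  have "\<not> frozen V E L (\<phi>(w := f)) v"
    by (rule unfreeze_nbr[OF assms(2) True v w vw f(2)])
  then have "reaches_c (\<phi>(w := f))"
    using reaches_c_v_not_frozen[of "\<phi>(w := f)"] assms(1) same_blockers
      reconf_colouring[OF step assms(2)] by simp
  with step show ?thesis by (rule reaches_c_reconf)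
next
  case False
  then show ?thesis using reaches_c_v_not_frozen[OF assms(1,2)] by blast
qed

lemma reaches_c_unless_stuck:
  assumes "reaches_c_below (card (blockers \<phi>))" "L_colouring V E L \<phi>" "\<not> stuck \<phi>"
  shows "reaches_c \<phi>"
  using assms(3) reaches_c_no_blockers[OF assms(2)] reaches_c_blocker_not_frozen[OF assms(1,2)]
    reaches_c_v_not_frozen[OF assms(1,2)] reaches_c_w_not_frozen[OF assms(1,2)]
  unfolding stuck_def by blast

text \<open>While r holds c, its old colour is free for v. This lets w take the colour of v and
  v take the colour of w, after which r moves back.\<close>

lemma reconf_swap_v_w:
  assumes col: "L_colouring V E L \<phi>" and fv: "frozen V E L \<phi> v" and fw: "frozen V E L \<phi> w"
    and "\<phi> v \<noteq> c" and r: "r \<in> V" "E v r" "r \<noteq> w" "\<phi> r \<noteq> c"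
    and c_r: "c \<in> L r" "\<forall>y\<in>V. E r y \<longrightarrow> \<phi> y \<noteq> c"
  shows "reconf V E L \<phi> (\<phi>(v := \<phi> w, w := \<phi> v))"
proof -
  have "v \<noteq> w" "v \<noteq> r" using vw r(2) edge_neq by auto
  note proper = colouring_proper[OF col]
  note only_w = frozen_nbr_unique[OF col fv v w vw]
  note only_r = frozen_nbr_unique[OF col fv v r(1,2)]
  note only_v = frozen_nbr_unique[OF col fw w v edge_sym[OF vw]]
  have "\<phi> w \<noteq> \<phi> r" using only_w r by metis
  have "reconf V E L \<phi> (\<phi>(r := c))"
    using c_r r(1) by (intro recolour[OF col reconf_refl]) auto
  then have "reconf V E L \<phi> (\<phi>(r := c, v := \<phi> r))"
    using only_r r(4) frozen_nbr_in_list[OF col fv v r(1,2)]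
    by (intro recolour[OF col _ v]) auto
  then have "reconf V E L \<phi> (\<phi>(r := c, v := \<phi> r, w := \<phi> v))"
    using only_v proper[OF v r(1,2)] \<open>\<phi> v \<noteq> c\<close> \<open>v \<noteq> r\<close>
      frozen_nbr_in_list[OF col fw w v edge_sym[OF vw]]
    by (intro recolour[OF col _ w]) auto
  then have "reconf V E L \<phi> (\<phi>(r := c, v := \<phi> r, w := \<phi> v, v := \<phi> w))"
    using only_w proper[OF v w vw] \<open>\<phi> w \<noteq> \<phi> r\<close> \<open>v \<noteq> w\<close> \<open>v \<noteq> r\<close>
      c_w colouring_in_list[OF col w] frozen_nbr_in_list[OF col fv v w vw]
    by (intro recolour[OF col _ v]) auto
  then have "reconf V E L \<phi> (\<phi>(r := c, v := \<phi> r, w := \<phi> v, v := \<phi> w, r := \<phi> r))"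
    using proper[OF _ r(1)] proper[OF v r(1,2)] \<open>\<phi> w \<noteq> \<phi> r\<close> \<open>v \<noteq> r\<close> r
      colouring_in_list[OF col r(1)]
    by (intro recolour[OF col _ r(1)]) (auto dest: edge_sym)
  then show ?thesis using \<open>v \<noteq> r\<close> \<open>v \<noteq> w\<close> r(3) by (simp add: fun_upd_twist)
qed

lemma reaches_c_stuck_via_nbr:
  assumes "reaches_c_below (card (blockers \<phi>))" "L_colouring V E L \<phi>" "stuck \<phi>"
    and r: "r \<in> V" "E v r" "\<not> frozen V E L \<phi> r" "c \<in> L r" "\<forall>y\<in>V. E r y \<longrightarrow> \<phi> y \<noteq> c"
  shows "reaches_c \<phi>"
proof -
  obtain u where u: "u \<in> blockers \<phi>" "frozen V E L \<phi> u"
    using assms(3) unfolding stuck_def by blast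
  then have "u \<in> V" "E v u" "\<phi> u = c" unfolding blockers_def by auto
  have fv: "frozen V E L \<phi> v" and fw: "frozen V E L \<phi> w"
    using assms(3) unfolding stuck_def by auto
  have "\<phi> v \<noteq> c"
    using colouring_proper[OF assms(2) v \<open>u \<in> V\<close> \<open>E v u\<close>] \<open>\<phi> u = c\<close> by simp
  have "\<phi> w \<noteq> c" using colouring_in_list[OF assms(2) w] c_w by auto
  have "\<phi> r \<noteq> c" using r(1-3) assms(3) unfolding stuck_def blockers_def by auto
  have "r \<noteq> w" using r(3) fw by auto
  let ?\<psi> = "\<phi>(v := \<phi> w, w := \<phi> v)"
  have step: "reconf V E L \<phi> ?\<psi>"
    by (rule reconf_swap_v_w) (use assms(2) fv fw r \<open>\<phi> v \<noteq> c\<close> \<open>\<phi> r \<noteq> c\<close> \<open>r \<noteq> w\<close> in auto)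
  have same_blockers: "blockers ?\<psi> = blockers \<phi>"
    using \<open>\<phi> v \<noteq> c\<close> \<open>\<phi> w \<noteq> c\<close> edge_neq unfolding blockers_def by auto
  have "\<not> E u w"
    using frozen_nbr_in_list[OF assms(2) fw w \<open>u \<in> V\<close>] \<open>\<phi> u = c\<close> c_w edge_sym by auto
  then have "\<forall>y\<in>V. E u y \<longrightarrow> ?\<psi> y \<noteq> \<phi> v"
    using frozen_nbr_unique[OF assms(2) u(2) \<open>u \<in> V\<close> v edge_sym[OF \<open>E v u\<close>]]
      colouring_proper[OF assms(2) v w vw] by auto
  moreover have "\<phi> v \<in> L u - {?\<psi> u}"
    using frozen_nbr_in_list[OF assms(2) u(2) \<open>u \<in> V\<close> v edge_sym[OF \<open>E v u\<close>]]
      \<open>\<phi> v \<noteq> c\<close> \<open>\<phi> w \<noteq> c\<close> \<open>\<phi> u = c\<close> \<open>E v u\<close> edge_neq by auto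
  ultimately have "\<not> frozen V E L ?\<psi> u" unfolding frozen_def by blast
  then have "reaches_c ?\<psi>"
    using reaches_c_blocker_not_frozen[of ?\<psi> u] assms(1) u(1) same_blockers
      reconf_colouring[OF step assms(2)] by simp
  with step show ?thesis by (rule reaches_c_reconf)
qed

lemma reaches_c_along_path:
  assumes "reaches_c_below n" "(induced_adj (V - {v}) E)\<^sup>*\<^sup>* x w"
  shows "L_colouring V E L \<phi> \<Longrightarrow> card (blockers \<phi>) = n \<Longrightarrow> \<not> frozen V E L \<phi> x \<Longrightarrow> reaches_c \<phi>"
  using assms(2)
proof (induction arbitrary: \<phi> rule: converse_rtranclp_induct)
  case base
  then show ?case using reaches_c_w_not_frozen assms(1) by blast
next
  case (step z y)
  then have z: "z \<in> V" "\<not> frozen V E L \<phi> z" and y: "y \<in> V" "E z y" by auto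
  have IH: "reaches_c_below (card (blockers \<phi>))" using assms(1) step.prems(2) by simp
  consider "\<not> stuck \<phi>" | "\<not> frozen V E L \<phi> y"
    | "stuck \<phi>" "E v z" "c \<in> L z" "\<forall>x\<in>V. E z x \<longrightarrow> \<phi> x \<noteq> c"
    | "stuck \<phi>" "frozen V E L \<phi> y" "\<not> (E v z \<and> c \<in> L z \<and> (\<forall>x\<in>V. E z x \<longrightarrow> \<phi> x \<noteq> c))"
    by blast
  then show ?case
  proof cases
    case 1
    then show ?thesis using reaches_c_unless_stuck[OF IH step.prems(1)] by blast
  next
    case 2
    then show ?thesis using step.IH step.prems(1,2) by blast
  next
    case 3
    then show ?thesis using reaches_c_stuck_via_nbr[OF IH step.prems(1) _ z(1) _ z(2)] by blast
  next
    case 4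
    obtain e where e: "e \<in> L z" "e \<noteq> \<phi> z" "\<forall>x\<in>V. E z x \<longrightarrow> \<phi> x \<noteq> e"
      using z(2) by (rule not_frozenE)
    have recoloured: "reconf V E L \<phi> (\<phi>(z := e))"
      using e by (intro recolour[OF step.prems(1) reconf_refl z(1)]) auto
    have "z \<notin> blockers \<phi>" "E v z \<longrightarrow> e \<noteq> c" using 4 z(2) e unfolding stuck_def by auto
    then have "blockers (\<phi>(z := e)) = blockers \<phi>" unfolding blockers_def by auto
    then have "card (blockers (\<phi>(z := e))) = n" using step.prems(2) by metis
    moreover have "\<not> frozen V E L (\<phi>(z := e)) y"
      by (rule unfreeze_nbr[OF step.prems(1) 4(2) y(1) z(1) edge_sym[OF y(2)] e(2)])
    ultimately have "reaches_c (\<phi>(z := e))"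
      using step.IH reconf_colouring[OF recoloured step.prems(1)] by blast
    with recoloured show ?thesis by (rule reaches_c_reconf)
  qed
qed

lemma unfrozen_reaches_c: "unfrozen V E L \<phi> \<Longrightarrow> reaches_c \<phi>"
proof (induction "card (blockers \<phi>)" arbitrary: \<phi> rule: less_induct)
  case less
  then have IH: "reaches_c_below (card (blockers \<phi>))" unfolding reaches_c_below_def by blast
  obtain x where col: "L_colouring V E L \<phi>" and x: "x \<in> V" "\<not> frozen V E L \<phi> x"
    using less.prems unfolding unfrozen_def by blast
  show ?case
  proof (cases "x = v")
    case True
    then show ?thesis using reaches_c_v_not_frozen[OF IH col] x(2) by blast
  next
    case False
    have "w \<in> V - {v}" using w edge_neq[OF vw] by auto
    then have "(induced_adj (V - {v}) E)\<^sup>*\<^sup>* x w"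
      using connected_minus_v x(1) False unfolding connected_on_def by blast
    then show ?thesis using reaches_c_along_path[OF IH] col x(2) by blast
  qed
qed

end

theorem mainTheorem18:
  fixes V :: "'a set" and E :: "'a \<Rightarrow> 'a \<Rightarrow> bool" and L :: "'a \<Rightarrow> 'c set"
    and v w :: 'a and \<alpha> \<beta> :: "'a \<Rightarrow> 'c"
  assumes "simple_graph V E"
    and "connected_on V E"
    and "\<forall>u\<in>V. finite (L u) \<and> card (L u) \<ge> degree V E u + 1"
    and "v \<in> V" and "w \<in> V" and "E v w"
    and "\<not> L v \<subseteq> L w"
    and "connected_on (V - {v}) E"
    and "unfrozen V E L \<alpha>" and "unfrozen V E L \<beta>"
  shows "reconf V E L \<alpha> \<beta>"
proof -
  obtain c where "c \<in> L v" "c \<notin> L w" using assms(7) by blast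
  with assms interpret separating_colour V E L v w c
    by unfold_locales auto
  obtain \<alpha>' where \<alpha>': "reconf V E L \<alpha> \<alpha>'" "\<alpha>' v = c"
    using unfrozen_reaches_c[OF assms(9)] unfolding reaches_c_def by blast
  obtain \<beta>' where \<beta>': "reconf V E L \<beta> \<beta>'" "\<beta>' v = c"
    using unfrozen_reaches_c[OF assms(10)] unfolding reaches_c_def by blast
  have "L_colouring V E L \<alpha>'" "L_colouring V E L \<beta>'"
    using reconf_colouring \<alpha>'(1) \<beta>'(1) assms(9,10) unfolding unfrozen_def by blast+
  then have "reconf V E L \<alpha>' \<beta>'"
    using reconf_if_v_coloured_c \<alpha>'(2) \<beta>'(2) by blast
  with \<alpha>'(1) \<beta>'(1) show ?thesis by (meson reconf_sym reconf_trans)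
qed

end
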